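(* Let $(\Gamma,m)$ be a smooth closed Riemannian manifold and equip $\mathbb{R}^{n+1}\setminus\{0\}$ with the Riemannian metric $G(x)=\rho(x)\,\mathrm{Id}$, where $\rho(x)=\tfrac12+\tfrac1{2|x|^4}$. Let $f:\Gamma\times[0,T)\to\mathbb{R}^{n+1}\setminus\{0\}$ be a smooth solution of the extended harmonic map heat flow $f_t=\Delta_{m,G}f$. If $\big||f(\cdot,0)|-1\big|\le\delta$ on $\Gamma$ for some $\delta\in[0,1)$, then $\big||f|-1\big|\le\delta$ on $\Gamma\times[0,T)$.
   Context: Summation over repeated indices is used. For a map $f:(\Gamma,m)\to(\mathcal{N},G)$ with $\mathcal{N}\subset\mathbb{R}^{N}$ open, the map Laplacian is given in local coordinates on $\Gamma$ (Roman indices) and Euclidean coordinates on $\mathbb{R}^N$ (Greek indices) by $(\Delta_{m,G}f)^\alpha=m^{ij}\big(\partial_i\partial_jf^\alpha-\Gamma(m)^l_{ij}\partial_lf^\alpha+\Gamma(G)^\alpha_{\beta\gamma}\circ f\,\partial_if^\beta\partial_jf^\gamma\big)$, where $\Gamma(m),\Gamma(G)$ are the Christoffel symbols of $m$ and $G$. The metric $G$ above is obtained by averaging the Euclidean metric under the sphere inversion $x\mapsto x/|x|^2$, and the unit sphere is a totally geodesic submanifold for it. *)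

theory Defs
  imports "HOL-Analysis.Analysis"
begin

definition pd :: "('v::real_normed_vector \<Rightarrow> 'w::real_normed_vector) \<Rightarrow> 'v \<Rightarrow> 'v \<Rightarrow> 'w" where
  "pd h i x = frechet_derivative h (at x) i"

fun Ck :: "nat \<Rightarrow> 'a::euclidean_space set \<Rightarrow> ('a \<Rightarrow> 'b::real_normed_vector) \<Rightarrow> bool" where
  "Ck 0 S f = continuous_on S f"
| "Ck (Suc k) S f = ((\<forall>x\<in>S. f differentiable (at x)) \<and>
      (\<forall>b\<in>Basis. Ck k S (\<lambda>x. frechet_derivative f (at x) b)))"

definition smooth_open :: "'a::euclidean_space set \<Rightarrow> ('a \<Rightarrow> 'b::real_normed_vector) \<Rightarrow> bool" where
  "smooth_open S f \<longleftrightarrow> open S \<and> (\<forall>k. Ck k S f)"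

definition smooth_set :: "'a::euclidean_space set \<Rightarrow> ('a \<Rightarrow> 'b::real_normed_vector) \<Rightarrow> bool" where
  "smooth_set S f \<longleftrightarrow> (\<forall>p\<in>S. \<exists>W g. open W \<and> p \<in> W \<and> smooth_open W g \<and> (\<forall>q\<in>W \<inter> S. g q = f q))"

definition inv_comp :: "('v::euclidean_space \<Rightarrow> 'v \<Rightarrow> real) \<Rightarrow> 'v \<Rightarrow> 'v \<Rightarrow> real" where
  "inv_comp B = (THE H. (\<forall>i\<in>Basis. \<forall>k\<in>Basis. (\<Sum>j\<in>Basis. H i j * B j k) = (if i = k then 1 else 0))
                  \<and> (\<forall>i j. i \<notin> Basis \<or> j \<notin> Basis \<longrightarrow> H i j = 0))"

definition christoffel :: "('v::euclidean_space \<Rightarrow> 'v \<Rightarrow> 'v \<Rightarrow> real) \<Rightarrow> 'v \<Rightarrow> 'v \<Rightarrow> 'v \<Rightarrow> 'v \<Rightarrow> real" where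
  "christoffel g x l i j = (\<Sum>k\<in>Basis. inv_comp (g x) l k *
      (pd (\<lambda>y. g y j k) i x + pd (\<lambda>y. g y i k) j x - pd (\<lambda>y. g y i j) k x)) / 2"

definition map_laplacian :: "('d::euclidean_space \<Rightarrow> 'd \<Rightarrow> 'd \<Rightarrow> real) \<Rightarrow> ('e::euclidean_space \<Rightarrow> 'e \<Rightarrow> 'e \<Rightarrow> real)
      \<Rightarrow> ('d \<Rightarrow> 'e) \<Rightarrow> 'd \<Rightarrow> 'e" where
  "map_laplacian m G F x = (\<Sum>i\<in>Basis. \<Sum>j\<in>Basis. inv_comp (m x) i j *\<^sub>R
      (pd (pd F j) i x - (\<Sum>l\<in>Basis. christoffel m x l i j *\<^sub>R pd F l x)
       + (\<Sum>\<alpha>\<in>Basis. (\<Sum>\<beta>\<in>Basis. \<Sum>\<gamma>\<in>Basis.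
            christoffel G (F x) \<alpha> \<beta> \<gamma> * (pd F i x \<bullet> \<beta>) * (pd F j x \<bullet> \<gamma>)) *\<^sub>R \<alpha>)))"

definition rho :: "'e::euclidean_space \<Rightarrow> real" where
  "rho y = 1/2 + 1 / (2 * norm y ^ 4)"

definition Gmetric :: "'e::euclidean_space \<Rightarrow> 'e \<Rightarrow> 'e \<Rightarrow> real" where
  "Gmetric y u v = rho y * (u \<bullet> v)"

text \<open>A smooth closed Riemannian manifold: the whole (Hausdorff) type 'a, compact,
  with a smooth atlas A of charts (U, phi, psi) (psi the inverse of phi on phi ` U), and a
  Riemannian metric given in each chart c by the bilinear forms M c x.\<close>
definition closed_riemannian ::
  "('a::t2_space set \<times> ('a \<Rightarrow> 'd::euclidean_space) \<times> ('d \<Rightarrow> 'a)) set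
   \<Rightarrow> (('a set \<times> ('a \<Rightarrow> 'd) \<times> ('d \<Rightarrow> 'a)) \<Rightarrow> 'd \<Rightarrow> 'd \<Rightarrow> 'd \<Rightarrow> real) \<Rightarrow> bool" where
  "closed_riemannian A M \<longleftrightarrow>
     compact (UNIV :: 'a set) \<and>
     (\<forall>U \<phi> \<psi>. (U, \<phi>, \<psi>) \<in> A \<longrightarrow> open U \<and> open (\<phi> ` U) \<and> homeomorphism U (\<phi> ` U) \<phi> \<psi>) \<and>
     (\<forall>p. \<exists>U \<phi> \<psi>. (U, \<phi>, \<psi>) \<in> A \<and> p \<in> U) \<and>
     (\<forall>U \<phi> \<psi> V \<kappa> \<theta>. (U, \<phi>, \<psi>) \<in> A \<longrightarrow> (V, \<kappa>, \<theta>) \<in> A \<longrightarrow>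
         smooth_set (\<phi> ` (U \<inter> V)) (\<kappa> \<circ> \<psi>)) \<and>
     (\<forall>U \<phi> \<psi>. (U, \<phi>, \<psi>) \<in> A \<longrightarrow>
        (\<forall>x\<in>\<phi> ` U. bilinear (M (U, \<phi>, \<psi>) x) \<and> (\<forall>u v. M (U, \<phi>, \<psi>) x u v = M (U, \<phi>, \<psi>) x v u)
                    \<and> (\<forall>u. u \<noteq> 0 \<longrightarrow> M (U, \<phi>, \<psi>) x u u > 0)) \<and>
        (\<forall>i\<in>Basis. \<forall>j\<in>Basis. smooth_set (\<phi> ` U) (\<lambda>x. M (U, \<phi>, \<psi>) x i j))) \<and>
     (\<forall>U \<phi> \<psi> V \<kappa> \<theta>. (U, \<phi>, \<psi>) \<in> A \<longrightarrow> (V, \<kappa>, \<theta>) \<in> A \<longrightarrow>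
        (\<forall>p\<in>U \<inter> V. \<forall>u v. M (U, \<phi>, \<psi>) (\<phi> p) u v =
            M (V, \<kappa>, \<theta>) (\<kappa> p) (frechet_derivative (\<kappa> \<circ> \<psi>) (at (\<phi> p)) u)
                               (frechet_derivative (\<kappa> \<circ> \<psi>) (at (\<phi> p)) v)))"

definition ehmhf_solution ::
  "('a::t2_space set \<times> ('a \<Rightarrow> 'd::euclidean_space) \<times> ('d \<Rightarrow> 'a)) set
   \<Rightarrow> (('a set \<times> ('a \<Rightarrow> 'd) \<times> ('d \<Rightarrow> 'a)) \<Rightarrow> 'd \<Rightarrow> 'd \<Rightarrow> 'd \<Rightarrow> real) \<Rightarrow> real
   \<Rightarrow> ('a \<Rightarrow> real \<Rightarrow> 'e::euclidean_space) \<Rightarrow> bool" where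
  "ehmhf_solution A M T f \<longleftrightarrow>
     (\<forall>p. \<forall>t\<in>{0..<T}. f p t \<noteq> 0) \<and>
     (\<forall>U \<phi> \<psi>. (U, \<phi>, \<psi>) \<in> A \<longrightarrow>
        smooth_set (\<phi> ` U \<times> {0..<T}) (\<lambda>(x, t). f (\<psi> x) t) \<and>
        (\<forall>p\<in>U. \<forall>t\<in>{0..<T}.
           ((\<lambda>s. f p s) has_vector_derivative
               map_laplacian (M (U, \<phi>, \<psi>)) Gmetric (\<lambda>x. f (\<psi> x) t) (\<phi> p)) (at t within {0..<T})))"

end

theory Submission
  imports Defs
begin

text \<open>Both bounds come from a maximum principle for \<open>|f|\<^sup>2\<close>. Suppose \<open>|f|\<^sup>2\<close> first
  reaches a level K \<ge> 1 from below at a spatial maximum p (or a level K \<le> 1 from above at a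
  spatial minimum). There the differential of f is tangent to the sphere through f(p), so the
  Christoffel symbols of G contribute only the normal term
  \<open>\<langle>f, \<Delta>f\<rangle> = tr\<^sub>m (\<langle>f, \<nabla>\<^sup>2f\<rangle> + \<kappa> |df|\<^sup>2)\<close> with \<open>\<kappa> = 2 / (|f|\<^sup>4 + 1)\<close>.
  Splitting this as \<open>tr\<^sub>m (Hess |f|\<^sup>2 / 2) + (\<kappa> - 1) tr\<^sub>m |df|\<^sup>2\<close>, the Hessian term has the
  sign of the extremum and \<open>\<kappa> \<le> 1\<close> outside, \<open>\<kappa> \<ge> 1\<close> inside the unit sphere, so
  \<open>\<partial>\<^sub>t |f|\<^sup>2 = 2\<langle>f, \<Delta>f\<rangle>\<close> pushes \<open>|f|\<^sup>2\<close> back from K. A small penalty linear in time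
  makes the first-touching argument strict.\<close>

definition quad_form :: "'i set \<Rightarrow> ('i \<Rightarrow> 'i \<Rightarrow> real) \<Rightarrow> ('i \<Rightarrow> real) \<Rightarrow> real" where
  "quad_form I P v = (\<Sum>i\<in>I. \<Sum>j\<in>I. v i * v j * P i j)"

definition pos_def_on :: "'i set \<Rightarrow> ('i \<Rightarrow> 'i \<Rightarrow> real) \<Rightarrow> bool" where
  "pos_def_on I P \<longleftrightarrow> (\<forall>v. (\<exists>i\<in>I. v i \<noteq> 0) \<longrightarrow> quad_form I P v > 0)"

lemma pos_def_on_imp_quad_form_nonneg:
  assumes "pos_def_on I P"
  shows "quad_form I P v \<ge> 0"
proof (cases "\<exists>i\<in>I. v i \<noteq> 0")
  case True
  then show ?thesis using assms unfolding pos_def_on_def by (meson less_imp_le)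
next
  case False
  then show ?thesis unfolding quad_form_def by simp
qed

lemma pos_def_on_diag_pos:
  assumes "finite I" "pos_def_on I P" "k \<in> I"
  shows "P k k > 0"
proof -
  let ?e = "\<lambda>i. if i = k then 1 else 0 :: real"
  have "quad_form I P ?e > 0"
    using assms(2,3) unfolding pos_def_on_def by force
  moreover have "quad_form I P ?e = P k k"
  proof -
    obtain J where "I = insert k J" "k \<notin> J" "finite J"
      using assms(1,3) by (metis Set.set_insert finite_insert)
    then show ?thesis by (simp add: quad_form_def sum.neutral)
  qed
  ultimately show ?thesis by simp
qed

lemma pos_def_on_schur_complement:
  fixes P :: "'i \<Rightarrow> 'i \<Rightarrow> real"
  assumes fin: "finite I" and k: "k \<notin> I"
    and sym: "\<forall>i\<in>insert k I. \<forall>j\<in>insert k I. P i j = P j i"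
    and pd: "pos_def_on (insert k I) P"
  shows "pos_def_on I (\<lambda>i j. P i j - P k i * P k j / P k k)"
  unfolding pos_def_on_def
proof (intro allI impI)
  fix v :: "'i \<Rightarrow> real" assume nz: "\<exists>i\<in>I. v i \<noteq> 0"
  have kk: "P k k > 0" using pos_def_on_diag_pos[OF _ pd] fin by simp
  define a where "a = (\<Sum>j\<in>I. P k j * v j)"
  \<comment> \<open>Complete the square: choose the k-th coordinate to cancel the cross terms.\<close>
  define w where "w = v(k := - a / P k k)"
  have wI: "\<forall>i\<in>I. w i = v i" using k by (auto simp: w_def)
  have pos: "quad_form (insert k I) P w > 0"
    using pd nz wI unfolding pos_def_on_def by (metis insertCI)
  have expand: "quad_form (insert k I) P w
       = w k * w k * P k k + w k * (\<Sum>j\<in>I. w j * P k j) + w k * (\<Sum>i\<in>I. w i * P i k)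
         + quad_form I P w"
    using fin k by (simp add: quad_form_def sum.distrib sum_distrib_left algebra_simps)
  have col: "(\<Sum>i\<in>I. w i * P i k) = a"
    unfolding a_def using wI sym by (intro sum.cong refl) (metis insertCI mult.commute)
  have row: "(\<Sum>j\<in>I. w j * P k j) = a"
    unfolding a_def using wI by (intro sum.cong refl) (metis mult.commute)
  have rest: "quad_form I P w = quad_form I P v"
    unfolding quad_form_def using wI by (intro sum.cong) auto
  have "w k * w k * P k k + w k * a + w k * a = - a * a / P k k"
    using kk by (simp add: w_def field_simps)
  moreover have "0 < w k * w k * P k k + w k * a + w k * a + quad_form I P v"
    using pos unfolding expand col row rest .
  moreover have "quad_form I (\<lambda>i j. P i j - P k i * P k j / P k k) v = quad_form I P v - a * a / P k k"
  proof -
    have "(\<Sum>i\<in>I. \<Sum>j\<in>I. (P k i * v i) * (P k j * v j) / P k k) = a * a / P k k"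
      unfolding a_def by (simp only: sum_product sum_divide_distrib)
    then show ?thesis
      unfolding quad_form_def by (simp add: sum_subtractf algebra_simps)
  qed
  ultimately show "quad_form I (\<lambda>i j. P i j - P k i * P k j / P k k) v > 0"
    by linarith
qed

text \<open>Induction on I: removing one coordinate replaces P by its Schur complement.\<close>
lemma pos_def_neg_semidef_trace_nonpos:
  assumes "finite I"
    and "\<forall>i\<in>I. \<forall>j\<in>I. P i j = P j i" and "pos_def_on I P"
    and "\<forall>v. quad_form I Q v \<le> 0"
  shows "(\<Sum>i\<in>I. \<Sum>j\<in>I. P i j * Q i j) \<le> 0"
  using assms
proof (induction I arbitrary: P rule: finite_induct)
  case empty
  then show ?case by simp
next
  case (insert k I)
  have kk: "P k k > 0" using pos_def_on_diag_pos[OF _ insert.prems(2)] insert.hyps by simp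
  define P' where "P' i j = P i j - P k i * P k j / P k k" for i j
  have "pos_def_on I P'"
    unfolding P'_def by (rule pos_def_on_schur_complement[OF insert.hyps insert.prems(1,2)])
  moreover have "\<forall>i\<in>I. \<forall>j\<in>I. P' i j = P' j i"
  proof (intro ballI)
    fix i j assume "i \<in> I" "j \<in> I"
    then have "P i j = P j i" using insert.prems(1) by blast
    then show "P' i j = P' j i" unfolding P'_def by (simp add: ac_simps)
  qed
  moreover have "\<forall>v. quad_form I Q v \<le> 0"
  proof
    fix v :: "'a \<Rightarrow> real"
    have "quad_form (insert k I) Q (v(k := 0)) = quad_form I Q v"
      using insert.hyps unfolding quad_form_def by (simp, intro sum.cong) auto
    then show "quad_form I Q v \<le> 0" using insert.prems(3) by metis
  qed
  ultimately have IH: "(\<Sum>i\<in>I. \<Sum>j\<in>I. P' i j * Q i j) \<le> 0"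
    using insert.IH by blast
  have P'_row_zero: "P' k j = 0" "P' j k = 0" if "j \<in> insert k I" for j
    using kk insert.prems(1) that unfolding P'_def by auto
  have "P i j * Q i j = P' i j * Q i j + P k i * P k j * Q i j / P k k" for i j
    using kk unfolding P'_def by (simp add: field_simps)
  then have "(\<Sum>i\<in>insert k I. \<Sum>j\<in>insert k I. P i j * Q i j)
     = (\<Sum>i\<in>insert k I. \<Sum>j\<in>insert k I. P' i j * Q i j) + quad_form (insert k I) Q (P k) / P k k"
    unfolding quad_form_def by (simp add: sum.distrib sum_divide_distrib)
  also have "(\<Sum>i\<in>insert k I. \<Sum>j\<in>insert k I. P' i j * Q i j) = (\<Sum>i\<in>I. \<Sum>j\<in>I. P' i j * Q i j)"
    using insert.hyps P'_row_zero by simp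
  finally have "(\<Sum>i\<in>insert k I. \<Sum>j\<in>insert k I. P i j * Q i j)
      = (\<Sum>i\<in>I. \<Sum>j\<in>I. P' i j * Q i j) + quad_form (insert k I) Q (P k) / P k k" .
  moreover have "quad_form (insert k I) Q (P k) / P k k \<le> 0"
    using insert.prems(3) kk by (simp add: divide_nonpos_pos)
  ultimately show ?case using IH by linarith
qed

lemma bilinear_sum_scaleR_left:
  assumes "bilinear B"
  shows "B (\<Sum>j\<in>S. c j *\<^sub>R u j) w = (\<Sum>j\<in>S. c j * B (u j) w)"
proof -
  interpret linear "\<lambda>x. B x w" using assms by (simp add: bilinear_def)
  show ?thesis by (simp add: sum scale)
qed

lemma bilinear_sum_scaleR_right:
  assumes "bilinear B"
  shows "B w (\<Sum>j\<in>S. c j *\<^sub>R u j) = (\<Sum>j\<in>S. c j * B w (u j))"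
proof -
  interpret linear "\<lambda>y. B w y" using assms by (simp add: bilinear_def)
  show ?thesis by (simp add: sum scale)
qed

lemma bilinear_eq_inner_linear:
  fixes B :: "'v::euclidean_space \<Rightarrow> 'v \<Rightarrow> real"
  assumes "bilinear B"
  obtains L where "linear L" "\<And>u w. B u w = L u \<bullet> w"
proof
  define L where "L u = (\<Sum>k\<in>Basis. B u k *\<^sub>R k)" for u
  show "linear L"
    unfolding L_def linear_iff
    by (simp add: bilinear_ladd[OF assms] bilinear_lmul[OF assms] scaleR_add_left sum.distrib scaleR_sum_right)
  fix u w
  have "B u w = B u (\<Sum>k\<in>Basis. (w \<bullet> k) *\<^sub>R k)" by (simp add: euclidean_representation)
  also have "\<dots> = L u \<bullet> w"
    unfolding L_def bilinear_sum_scaleR_right[OF assms] inner_sum_left by (simp add: inner_commute mult.commute)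
  finally show "B u w = L u \<bullet> w" .
qed

lemma pos_def_bilinear_dual_basis:
  fixes B :: "'v::euclidean_space \<Rightarrow> 'v \<Rightarrow> real"
  assumes bil: "bilinear B" and pd: "\<forall>u. u \<noteq> 0 \<longrightarrow> B u u > 0"
  obtains a where "\<And>i u. B (a i) u = i \<bullet> u"
proof -
  obtain L where linL: "linear L" and BL: "\<And>u w. B u w = L u \<bullet> w"
    using bilinear_eq_inner_linear[OF bil] by blast
  have "inj L"
  proof (rule linear_injective_0[OF linL, THEN iffD2], intro allI impI)
    fix u assume "L u = 0"
    then have "B u u = 0" by (simp add: BL)
    then show "u = 0" using pd by (metis less_irrefl)
  qed
  then have "surj L" by (rule linear_inj_imp_surj[OF linL])
  then obtain a where "\<And>i. L (a i) = i" by (metis surjD)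
  then show ?thesis using that BL by metis
qed

lemma inv_comp_eqI:
  fixes B :: "'v::euclidean_space \<Rightarrow> 'v \<Rightarrow> real"
  assumes bil: "bilinear B" and pd: "\<forall>u. u \<noteq> 0 \<longrightarrow> B u u > 0"
    and H: "\<forall>i\<in>Basis. \<forall>k\<in>Basis. (\<Sum>j\<in>Basis. H i j * B j k) = (if i = k then 1 else 0)"
    and H0: "\<forall>i j. i \<notin> Basis \<or> j \<notin> Basis \<longrightarrow> H i j = 0"
  shows "inv_comp B = H"
  unfolding inv_comp_def
proof (rule the_equality)
  show "(\<forall>i\<in>Basis. \<forall>k\<in>Basis. (\<Sum>j\<in>Basis. H i j * B j k) = (if i = k then 1 else 0))
        \<and> (\<forall>i j. i \<notin> Basis \<or> j \<notin> Basis \<longrightarrow> H i j = 0)"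
    using H H0 by blast
  fix H' assume H': "(\<forall>i\<in>Basis. \<forall>k\<in>Basis. (\<Sum>j\<in>Basis. H' i j * B j k) = (if i = k then 1 else 0))
                  \<and> (\<forall>i j. i \<notin> Basis \<or> j \<notin> Basis \<longrightarrow> H' i j = 0)"
  show "H' = H"
  proof (intro ext)
    fix i j :: 'v
    show "H' i j = H i j"
    proof (cases "i \<in> Basis \<and> j \<in> Basis")
      case False
      then show ?thesis using H' H0 by auto
    next
      case True
      define d where "d = (\<Sum>j\<in>Basis. (H' i j - H i j) *\<^sub>R j)"
      have "B d k = 0" if k: "k \<in> Basis" for k
      proof -
        have "B d k = (\<Sum>j\<in>Basis. H' i j * B j k) - (\<Sum>j\<in>Basis. H i j * B j k)"
          unfolding d_def bilinear_sum_scaleR_left[OF bil] by (simp add: left_diff_distrib sum_subtractf)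
        then show ?thesis using H' H True k by simp
      qed
      then have "B d d = 0"
        using bilinear_sum_scaleR_right[OF bil, of d "\<lambda>k. d \<bullet> k" "\<lambda>k. k" Basis]
        by (simp add: euclidean_representation)
      then have "d = 0" using pd by (metis less_irrefl)
      moreover have "d \<bullet> j = H' i j - H i j"
        unfolding d_def using True by (simp add: inner_sum_left inner_Basis if_distrib cong: if_cong)
      ultimately show ?thesis by simp
    qed
  qed
qed

lemma inv_comp_dual_basis:
  fixes B :: "'v::euclidean_space \<Rightarrow> 'v \<Rightarrow> real"
  assumes bil: "bilinear B" and pd: "\<forall>u. u \<noteq> 0 \<longrightarrow> B u u > 0"
    and a: "\<And>i u. B (a i) u = i \<bullet> u"
  shows "inv_comp B = (\<lambda>i j. if i \<in> Basis \<and> j \<in> Basis then a i \<bullet> j else 0)"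
proof (rule inv_comp_eqI[OF bil pd]; intro ballI allI impI)
  fix i k :: 'v assume ik: "i \<in> Basis" "k \<in> Basis"
  have "(\<Sum>j\<in>Basis. (if i \<in> Basis \<and> j \<in> Basis then a i \<bullet> j else 0) * B j k)
      = B (\<Sum>j\<in>Basis. (a i \<bullet> j) *\<^sub>R j) k"
    using ik by (simp add: bilinear_sum_scaleR_left[OF bil])
  also have "\<dots> = i \<bullet> k" by (simp add: euclidean_representation a)
  finally show "(\<Sum>j\<in>Basis. (if i \<in> Basis \<and> j \<in> Basis then a i \<bullet> j else 0) * B j k)
      = (if i = k then 1 else 0)"
    using ik by (simp add: inner_Basis)
qed auto

lemma inv_comp_symmetric:
  fixes B :: "'v::euclidean_space \<Rightarrow> 'v \<Rightarrow> real"
  assumes bil: "bilinear B" and sym: "\<forall>u w. B u w = B w u" and pd: "\<forall>u. u \<noteq> 0 \<longrightarrow> B u u > 0"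
  shows "\<forall>i\<in>Basis. \<forall>j\<in>Basis. inv_comp B i j = inv_comp B j i"
proof -
  obtain a where a: "\<And>i u. B (a i) u = i \<bullet> u"
    using pos_def_bilinear_dual_basis[OF bil pd] by blast
  have "a i \<bullet> j = a j \<bullet> i" for i j
    using a[of j "a i"] a[of i "a j"] sym by (simp add: inner_commute)
  then show ?thesis by (simp add: inv_comp_dual_basis[OF bil pd a])
qed

lemma inv_comp_pos_def:
  fixes B :: "'v::euclidean_space \<Rightarrow> 'v \<Rightarrow> real"
  assumes bil: "bilinear B" and pd: "\<forall>u. u \<noteq> 0 \<longrightarrow> B u u > 0"
  shows "pos_def_on Basis (inv_comp B)"
  unfolding pos_def_on_def
proof (intro allI impI)
  fix v :: "'v \<Rightarrow> real" assume nz: "\<exists>i\<in>Basis. v i \<noteq> 0"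
  obtain a where a: "\<And>i u. B (a i) u = i \<bullet> u"
    using pos_def_bilinear_dual_basis[OF bil pd] by blast
  define A where "A = (\<Sum>i\<in>Basis. v i *\<^sub>R a i)"
  have BA: "B A j = v j" if "j \<in> Basis" for j
    using that by (simp add: A_def bilinear_sum_scaleR_left[OF bil] a inner_Basis if_distrib cong: if_cong)
  have "A \<noteq> 0"
    using nz BA bilinear_lzero[OF bil] by force
  then have "B A A > 0" using pd by blast
  also have "B A A = (\<Sum>i\<in>Basis. \<Sum>j\<in>Basis. v i * v j * (a j \<bullet> i))"
    by (simp add: A_def bilinear_sum_scaleR_left[OF bil] a inner_sum_right sum_distrib_left
        mult.assoc inner_commute)
  also have "\<dots> = quad_form Basis (inv_comp B) v"
    unfolding quad_form_def inv_comp_dual_basis[OF bil pd a]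
    by (subst sum.swap) (simp add: mult.commute)
  finally show "quad_form Basis (inv_comp B) v > 0" .
qed

lemma rho_eq_inverse_inner: "rho y = 1/2 + inverse (2 * (y \<bullet> y)^2)"
proof -
  have "norm y ^ 4 = (norm y ^ 2) ^ 2" by (simp flip: power_mult)
  also have "\<dots> = (y \<bullet> y) ^ 2" by (simp only: power2_norm_eq_inner)
  finally have e: "norm y ^ 4 = (y \<bullet> y) ^ 2" .
  show ?thesis unfolding rho_def e by (simp only: divide_inverse mult_1_left)
qed

lemma has_derivative_rho:
  fixes y :: "'e::euclidean_space"
  assumes "y \<noteq> 0"
  shows "(rho has_derivative (\<lambda>h. -2 * (y \<bullet> h) / (y \<bullet> y)^3)) (at y)"
proof -
  have "((\<lambda>y::'e. 1/2 + inverse (2 * (y \<bullet> y)^2)) has_derivative (\<lambda>h. -2 * (y \<bullet> h) / (y \<bullet> y)^3)) (at y)"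
    using assms by (auto intro!: derivative_eq_intros)
      (simp add: fun_eq_iff inner_commute field_simps power2_eq_square power3_eq_cube)
  then show ?thesis unfolding rho_eq_inverse_inner[abs_def] by simp
qed

lemma rho_pos: "rho y > 0"
  unfolding rho_def by (simp add: add_pos_nonneg)

lemma sum_Basis_delta:
  fixes \<alpha> :: "'e::euclidean_space" and c :: real and X :: "'e \<Rightarrow> real"
  assumes "\<alpha> \<in> Basis"
  shows "(\<Sum>k\<in>Basis. (if \<alpha> \<in> Basis \<and> k \<in> Basis \<and> \<alpha> = k then c else 0) * X k) = c * X \<alpha>"
proof -
  have "(\<Sum>k\<in>Basis. (if \<alpha> \<in> Basis \<and> k \<in> Basis \<and> \<alpha> = k then c else 0) * X k) = (\<Sum>k\<in>Basis. if \<alpha> = k then c * X k else 0)"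
    using assms by (intro sum.cong) auto
  also have "\<dots> = c * X \<alpha>" using assms by (simp add: sum.delta)
  finally show ?thesis .
qed

lemma bilinear_Gmetric: "bilinear (Gmetric y)"
  unfolding bilinear_def Gmetric_def linear_iff by (simp add: inner_add_left inner_add_right algebra_simps)

lemma Gmetric_pos: "u \<noteq> 0 \<Longrightarrow> Gmetric y u u > 0"
  unfolding Gmetric_def using rho_pos[of y] by simp

lemma inv_comp_Gmetric:
  fixes y :: "'e::euclidean_space"
  shows "inv_comp (Gmetric y) = (\<lambda>i j. if i \<in> Basis \<and> j \<in> Basis \<and> i = j then 1 / rho y else 0)"
proof (rule inv_comp_eqI[OF bilinear_Gmetric]; intro ballI allI impI)
  fix i k :: 'e assume ik: "i \<in> Basis" "k \<in> Basis"
  show "(\<Sum>j\<in>Basis. (if i \<in> Basis \<and> j \<in> Basis \<and> i = j then 1 / rho y else 0) * Gmetric y j k)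
      = (if i = k then 1 else 0)"
    unfolding sum_Basis_delta[OF ik(1)] using ik rho_pos[of y] by (simp add: Gmetric_def inner_Basis)
qed (auto simp: Gmetric_pos)

lemma pd_Gmetric_component:
  fixes y :: "'e::euclidean_space"
  assumes "y \<noteq> 0"
  shows "pd (\<lambda>z. Gmetric z u v) w y = (u \<bullet> v) * (-2 * (y \<bullet> w) / (y \<bullet> y)^3)"
proof -
  have "((\<lambda>z. Gmetric z u v) has_derivative (\<lambda>h. (-2 * (y \<bullet> h) / (y \<bullet> y)^3) * (u \<bullet> v))) (at y)"
    unfolding Gmetric_def by (rule has_derivative_mult_left[OF has_derivative_rho[OF assms]])
  then show ?thesis unfolding pd_def by (simp add: frechet_derivative_at[symmetric])
qed

lemma christoffel_Gmetric:
  fixes y :: "'e::euclidean_space"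
  assumes "y \<noteq> 0" "\<alpha> \<in> Basis"
  shows "christoffel Gmetric y \<alpha> \<beta> \<gamma> = (-2 / (y \<bullet> y)^3) / (2 * rho y) *
     ((\<gamma> \<bullet> \<alpha>) * (y \<bullet> \<beta>) + (\<beta> \<bullet> \<alpha>) * (y \<bullet> \<gamma>) - (\<beta> \<bullet> \<gamma>) * (y \<bullet> \<alpha>))"
  unfolding christoffel_def inv_comp_Gmetric pd_Gmetric_component[OF assms(1)] sum_Basis_delta[OF assms(2)]
  using rho_pos[of y] assms(1) by (simp add: divide_simps)

lemma christoffel_Gmetric_contraction:
  fixes y a b :: "'e::euclidean_space"
  assumes y: "y \<noteq> 0" and \<alpha>: "\<alpha> \<in> Basis"
  shows "(\<Sum>\<beta>\<in>Basis. \<Sum>\<gamma>\<in>Basis. christoffel Gmetric y \<alpha> \<beta> \<gamma> * (a \<bullet> \<beta>) * (b \<bullet> \<gamma>))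
     = (-2 / (y \<bullet> y)^3) / (2 * rho y) * ((y \<bullet> a) * (b \<bullet> \<alpha>) + (y \<bullet> b) * (a \<bullet> \<alpha>) - (a \<bullet> b) * (y \<bullet> \<alpha>))"
proof -
  define k where "k = (-2 / (y \<bullet> y)^3) / (2 * rho y)"
  have "(\<Sum>\<gamma>\<in>Basis. christoffel Gmetric y \<alpha> \<beta> \<gamma> * (b \<bullet> \<gamma>))
      = k * ((y \<bullet> \<beta>) * (\<Sum>\<gamma>\<in>Basis. (b \<bullet> \<gamma>) * (\<alpha> \<bullet> \<gamma>)) + (\<beta> \<bullet> \<alpha>) * (\<Sum>\<gamma>\<in>Basis. (b \<bullet> \<gamma>) * (y \<bullet> \<gamma>))
          - (y \<bullet> \<alpha>) * (\<Sum>\<gamma>\<in>Basis. (b \<bullet> \<gamma>) * (\<beta> \<bullet> \<gamma>)))" for \<beta>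
    unfolding christoffel_Gmetric[OF y \<alpha>] k_def[symmetric]
    by (simp add: sum_distrib_left sum.distrib sum_subtractf algebra_simps inner_commute)
  then have inner_sum: "(\<Sum>\<gamma>\<in>Basis. christoffel Gmetric y \<alpha> \<beta> \<gamma> * (b \<bullet> \<gamma>))
      = k * ((y \<bullet> \<beta>) * (b \<bullet> \<alpha>) + (\<beta> \<bullet> \<alpha>) * (b \<bullet> y) - (y \<bullet> \<alpha>) * (b \<bullet> \<beta>))" for \<beta>
    by (simp only: euclidean_inner[symmetric])
  have "(\<Sum>\<beta>\<in>Basis. \<Sum>\<gamma>\<in>Basis. christoffel Gmetric y \<alpha> \<beta> \<gamma> * (a \<bullet> \<beta>) * (b \<bullet> \<gamma>))
      = (\<Sum>\<beta>\<in>Basis. (a \<bullet> \<beta>) * (\<Sum>\<gamma>\<in>Basis. christoffel Gmetric y \<alpha> \<beta> \<gamma> * (b \<bullet> \<gamma>)))"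
    by (simp add: sum_distrib_left algebra_simps)
  also have "\<dots> = k * ((b \<bullet> \<alpha>) * (\<Sum>\<beta>\<in>Basis. (a \<bullet> \<beta>) * (y \<bullet> \<beta>)) + (b \<bullet> y) * (\<Sum>\<beta>\<in>Basis. (a \<bullet> \<beta>) * (\<alpha> \<bullet> \<beta>))
      - (y \<bullet> \<alpha>) * (\<Sum>\<beta>\<in>Basis. (a \<bullet> \<beta>) * (b \<bullet> \<beta>)))"
    unfolding inner_sum by (simp add: sum_distrib_left sum.distrib sum_subtractf algebra_simps inner_commute)
  also have "\<dots> = k * ((y \<bullet> a) * (b \<bullet> \<alpha>) + (y \<bullet> b) * (a \<bullet> \<alpha>) - (a \<bullet> b) * (y \<bullet> \<alpha>))"
    by (simp only: euclidean_inner[symmetric]) (simp add: inner_commute algebra_simps)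
  finally show ?thesis unfolding k_def .
qed

lemma christoffel_Gmetric_normal_component:
  fixes y a b :: "'e::euclidean_space"
  assumes y: "y \<noteq> 0" and "a \<bullet> y = 0" "b \<bullet> y = 0"
  shows "(\<Sum>\<alpha>\<in>Basis. (\<Sum>\<beta>\<in>Basis. \<Sum>\<gamma>\<in>Basis. christoffel Gmetric y \<alpha> \<beta> \<gamma> * (a \<bullet> \<beta>) * (b \<bullet> \<gamma>)) * (y \<bullet> \<alpha>))
     = 2 * (a \<bullet> b) / ((y \<bullet> y)^2 + 1)"
proof -
  define k where "k = (-2 / (y \<bullet> y)^3) / (2 * rho y)"
  have "(\<Sum>\<alpha>\<in>Basis. (\<Sum>\<beta>\<in>Basis. \<Sum>\<gamma>\<in>Basis. christoffel Gmetric y \<alpha> \<beta> \<gamma> * (a \<bullet> \<beta>) * (b \<bullet> \<gamma>)) * (y \<bullet> \<alpha>))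
     = (\<Sum>\<alpha>\<in>Basis. k * ((y \<bullet> a) * (b \<bullet> \<alpha>) + (y \<bullet> b) * (a \<bullet> \<alpha>) - (a \<bullet> b) * (y \<bullet> \<alpha>)) * (y \<bullet> \<alpha>))"
    by (intro sum.cong refl) (simp add: christoffel_Gmetric_contraction[OF y] k_def)
  also have "\<dots> = - k * (a \<bullet> b) * (\<Sum>\<alpha>\<in>Basis. (y \<bullet> \<alpha>) * (y \<bullet> \<alpha>))"
    using assms(2,3) by (simp add: inner_commute sum_distrib_left algebra_simps)
  also have "\<dots> = - k * (y \<bullet> y) * (a \<bullet> b)" by (simp add: euclidean_inner[symmetric])
  also have "- k * (y \<bullet> y) = 2 / ((y \<bullet> y)^2 + 1)"
  proof -
    have yy: "y \<bullet> y > 0" using y by simp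
    then have "rho y = ((y \<bullet> y)^2 + 1) / (2 * (y \<bullet> y)^2)"
      unfolding rho_eq_inverse_inner by (simp add: field_simps)
    moreover have "y \<bullet> y + y \<bullet> y * (y \<bullet> y * (y \<bullet> y)) > 0" "1 + y \<bullet> y * (y \<bullet> y) > 0"
      using yy by (simp_all add: add_pos_pos)
    ultimately show ?thesis unfolding k_def using yy
      by (simp add: field_simps power2_eq_square power3_eq_cube)
  qed
  finally show ?thesis by simp
qed

lemma local_max_second_derivative_nonpos:
  fixes H g :: "real \<Rightarrow> real"
  assumes d: "d > 0"
    and H': "\<And>s. 0 \<le> s \<Longrightarrow> s < d \<Longrightarrow> (H has_real_derivative g s) (at s)"
    and g0: "g 0 = 0" and g': "(g has_real_derivative g2) (at 0)"
    and max: "\<And>s. 0 \<le> s \<Longrightarrow> s < d \<Longrightarrow> H s \<le> H 0"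
  shows "g2 \<le> 0"
proof (rule ccontr)
  assume "\<not> g2 \<le> 0"
  then obtain d' where d': "d' > 0" "\<And>h. 0 < h \<Longrightarrow> h < d' \<Longrightarrow> g 0 < g (0 + h)"
    using DERIV_pos_inc_right[OF g'] by force
  define s where "s = min d d' / 2"
  have s: "s > 0" "s < d" "s < d'" using d d' by (auto simp: s_def)
  have "H 0 < H s"
  proof (rule DERIV_pos_imp_increasing_open[OF s(1)])
    fix x assume x: "0 < x" "x < s"
    have "(H has_real_derivative g x) (at x)" using H' x s by simp
    moreover have "g x > 0" using d'(2)[of x] x s g0 by simp
    ultimately show "\<exists>y. DERIV H x :> y \<and> y > 0" by blast
  next
    show "continuous_on {0..s} H"
    proof (intro continuous_at_imp_continuous_on ballI)
      fix x assume "x \<in> {0..s}"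
      then show "isCont H x" using H' s by (meson DERIV_isCont atLeastAtMost_iff le_less_trans)
    qed
  qed
  moreover have "H s \<le> H 0" using max s by simp
  ultimately show False by simp
qed

lemma frechet_derivative_Basis_expansion:
  fixes F :: "'d::euclidean_space \<Rightarrow> 'w::real_normed_vector"
  assumes "F differentiable (at x)"
  shows "frechet_derivative F (at x) (\<Sum>i\<in>Basis. v i *\<^sub>R i) = (\<Sum>i\<in>Basis. v i *\<^sub>R pd F i x)"
  using linear_frechet_derivative[OF assms]
  by (simp add: linear_sum linear_scale comp_def pd_def)

lemma sq_norm_local_max_critical:
  fixes F :: "'d::euclidean_space \<Rightarrow> 'e::euclidean_space" and \<sigma> :: real
  assumes V: "open V" "x0 \<in> V" and dF: "\<forall>x\<in>V. F differentiable (at x)" and "\<sigma> \<noteq> 0"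
    and max: "\<forall>x\<in>V. \<sigma> * (F x \<bullet> F x) \<le> \<sigma> * (F x0 \<bullet> F x0)"
  shows "F x0 \<bullet> frechet_derivative F (at x0) k = 0"
proof -
  let ?DF = "frechet_derivative F (at x0)"
  have "(F has_derivative ?DF) (at x0)"
    using dF V by (simp add: frechet_derivative_works[symmetric])
  then have "((\<lambda>x. \<sigma> * (F x \<bullet> F x)) has_derivative (\<lambda>k. \<sigma> * (F x0 \<bullet> ?DF k + ?DF k \<bullet> F x0))) (at x0)"
    by (intro has_derivative_mult_right has_derivative_inner)
  moreover have "eventually (\<lambda>x. \<sigma> * (F x \<bullet> F x) \<le> \<sigma> * (F x0 \<bullet> F x0)) (at x0)"
    unfolding eventually_at_topological using V max by blast
  ultimately have "(\<lambda>k. \<sigma> * (F x0 \<bullet> ?DF k + ?DF k \<bullet> F x0)) = (\<lambda>h. 0)"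
    by (rule has_derivative_local_max)
  then have "\<sigma> * (2 * (F x0 \<bullet> ?DF k)) = 0"
    by (metis (no_types) inner_commute mult_2)
  then show ?thesis using \<open>\<sigma> \<noteq> 0\<close> by simp
qed

text \<open>Restrict to the line through x0 in the direction \<open>\<Sum>i\<in>Basis. v i *\<^sub>R i\<close>.\<close>
lemma sq_norm_local_max_hessian:
  fixes F :: "'d::euclidean_space \<Rightarrow> 'e::euclidean_space" and \<sigma> :: real
  assumes V: "open V" "x0 \<in> V" and dF: "\<forall>x\<in>V. F differentiable (at x)"
    and d2F: "\<forall>j\<in>Basis. pd F j differentiable (at x0)" and "\<sigma> \<noteq> 0"
    and max: "\<forall>x\<in>V. \<sigma> * (F x \<bullet> F x) \<le> \<sigma> * (F x0 \<bullet> F x0)"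
  shows "\<sigma> * quad_form Basis (\<lambda>i j. pd F i x0 \<bullet> pd F j x0 + F x0 \<bullet> pd (pd F j) i x0) v \<le> 0"
proof -
  define e where "e = (\<Sum>i\<in>Basis. v i *\<^sub>R i)"
  define W where "W x = (\<Sum>j\<in>Basis. v j *\<^sub>R pd F j x)" for x
  define W' where "W' = (\<lambda>k. \<Sum>j\<in>Basis. v j *\<^sub>R frechet_derivative (pd F j) (at x0) k)"
  have hasF: "(F has_derivative (\<lambda>k. frechet_derivative F (at x) k)) (at x)" if "x \<in> V" for x
    using dF that by (simp add: frechet_derivative_works[symmetric])
  have DFe: "frechet_derivative F (at x) e = W x" if "x \<in> V" for x
    unfolding e_def W_def using dF that by (simp add: frechet_derivative_Basis_expansion)
  have hasW: "(W has_derivative W') (at x0)"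
    unfolding W_def W'_def using d2F
    by (intro has_derivative_sum has_derivative_scaleR_right) (simp add: frechet_derivative_works[symmetric])
  have W'e: "W' e = (\<Sum>j\<in>Basis. v j *\<^sub>R (\<Sum>i\<in>Basis. v i *\<^sub>R pd (pd F j) i x0))"
    unfolding W'_def e_def using d2F by (simp add: frechet_derivative_Basis_expansion)
  define g2 where "g2 = 2 * \<sigma> * (W x0 \<bullet> W x0 + F x0 \<bullet> W' e)"
  have g2_eq: "g2 = 2 * (\<sigma> * quad_form Basis (\<lambda>i j. pd F i x0 \<bullet> pd F j x0 + F x0 \<bullet> pd (pd F j) i x0) v)"
  proof -
    have "W x0 \<bullet> W x0 = (\<Sum>i\<in>Basis. \<Sum>j\<in>Basis. v i * v j * (pd F i x0 \<bullet> pd F j x0))"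
      unfolding W_def
      by (simp add: inner_sum_left inner_sum_right sum_distrib_left mult.assoc, subst sum.swap, simp add: algebra_simps)
    moreover have "F x0 \<bullet> W' e = (\<Sum>i\<in>Basis. \<Sum>j\<in>Basis. v i * v j * (F x0 \<bullet> pd (pd F j) i x0))"
      unfolding W'e by (simp add: inner_sum_right sum_distrib_left mult.assoc, subst sum.swap, simp add: algebra_simps)
    ultimately show ?thesis
      unfolding g2_def quad_form_def by (simp add: sum.distrib[symmetric] algebra_simps)
  qed
  show ?thesis
  proof (cases "e = 0")
    case True
    have "e \<bullet> i = v i" if "i \<in> Basis" for i
      unfolding e_def using that by (simp add: inner_sum_left inner_Basis if_distrib cong: if_cong)
    with True have "v i = 0" if "i \<in> Basis" for i
      using that by simp
    then show ?thesis by (simp add: quad_form_def)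
  next
    case False
    obtain r where r: "r > 0" "ball x0 r \<subseteq> V" using V open_contains_ball by blast
    define d where "d = r / norm e"
    have d: "d > 0" unfolding d_def using r False by simp
    have line: "x0 + s *\<^sub>R e \<in> V" if "\<bar>s\<bar> < d" for s
    proof -
      have "norm (s *\<^sub>R e) < r" using that False unfolding d_def by (simp add: pos_less_divide_eq)
      then show ?thesis using r by (auto simp: dist_norm)
    qed
    have lin: "((\<lambda>s. x0 + s *\<^sub>R e) has_derivative (\<lambda>t. t *\<^sub>R e)) (at s)" for s
      by (auto intro!: derivative_eq_intros)
    define g where "g s = 2 * \<sigma> * (F (x0 + s *\<^sub>R e) \<bullet> W (x0 + s *\<^sub>R e))" for s
    have H': "((\<lambda>s. \<sigma> * (F (x0 + s *\<^sub>R e) \<bullet> F (x0 + s *\<^sub>R e))) has_real_derivative g s) (at s)"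
      if "\<bar>s\<bar> < d" for s
    proof -
      note hF = has_derivative_compose[OF lin hasF[OF line[OF that]]]
      have "((\<lambda>s. \<sigma> * (F (x0 + s *\<^sub>R e) \<bullet> F (x0 + s *\<^sub>R e))) has_derivative (\<lambda>t. g s * t)) (at s)"
        using has_derivative_mult_right[OF has_derivative_inner[OF hF hF], of \<sigma>]
          linear_scale[OF linear_frechet_derivative, of F] dF line[OF that] DFe[OF line[OF that]]
        by (simp add: g_def inner_commute algebra_simps)
      then show ?thesis by (simp add: has_field_derivative_def)
    qed
    have g': "(g has_real_derivative g2) (at 0)"
    proof -
      let ?DF = "frechet_derivative F (at x0)"
      have linDF: "linear ?DF" using dF V(2) by (blast intro: linear_frechet_derivative)
      have F0: "((\<lambda>s. F (x0 + s *\<^sub>R e)) has_derivative (\<lambda>t. ?DF (t *\<^sub>R e))) (at 0)"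
        using has_derivative_compose[OF lin, of F ?DF 0] hasF[OF V(2)] by simp
      have W0: "((\<lambda>s. W (x0 + s *\<^sub>R e)) has_derivative (\<lambda>t. W' (t *\<^sub>R e))) (at 0)"
        using has_derivative_compose[OF lin, of W W' 0] hasW by simp
      have "(g has_derivative (\<lambda>t. 2 * \<sigma> * (F x0 \<bullet> W' (t *\<^sub>R e) + ?DF (t *\<^sub>R e) \<bullet> W x0))) (at 0)"
        unfolding g_def using has_derivative_mult_right[OF has_derivative_inner[OF F0 W0], of "2 * \<sigma>"]
        by simp
      moreover have "(\<lambda>t. 2 * \<sigma> * (F x0 \<bullet> W' (t *\<^sub>R e) + ?DF (t *\<^sub>R e) \<bullet> W x0)) = (*) g2"
        using linear_scale[OF linDF] linear_scale[OF has_derivative_linear[OF hasW]] DFe[OF V(2)]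
        by (auto simp: g2_def fun_eq_iff algebra_simps)
      ultimately show ?thesis by (simp add: has_field_derivative_def)
    qed
    have g0: "g 0 = 0"
      using sq_norm_local_max_critical[OF V dF \<open>\<sigma> \<noteq> 0\<close> max, of e] DFe[OF V(2)] by (simp add: g_def)
    have max_line: "\<sigma> * (F (x0 + s *\<^sub>R e) \<bullet> F (x0 + s *\<^sub>R e)) \<le> \<sigma> * (F (x0 + 0 *\<^sub>R e) \<bullet> F (x0 + 0 *\<^sub>R e))"
      if "0 \<le> s" "s < d" for s
      using max line[of s] that by simp
    have "g2 \<le> 0"
      by (rule local_max_second_derivative_nonpos[where H="\<lambda>s. \<sigma> * (F (x0 + s *\<^sub>R e) \<bullet> F (x0 + s *\<^sub>R e))",
            OF d _ g0 g' max_line])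
        (auto intro!: H')
    then show ?thesis using g2_eq by simp
  qed
qed

type_synonym ('a, 'd) chart = "'a set \<times> ('a \<Rightarrow> 'd) \<times> ('d \<Rightarrow> 'a)"

lemma closed_riemannian_compact:
  fixes A :: "('a::t2_space, 'd::euclidean_space) chart set"
    and M :: "('a, 'd) chart \<Rightarrow> 'd \<Rightarrow> 'd \<Rightarrow> 'd \<Rightarrow> real"
  assumes "closed_riemannian A M"
  shows "compact (UNIV :: 'a set)"
  using assms unfolding closed_riemannian_def by (elim conjE)

lemma closed_riemannian_chart:
  fixes A :: "('a::t2_space, 'd::euclidean_space) chart set"
    and M :: "('a, 'd) chart \<Rightarrow> 'd \<Rightarrow> 'd \<Rightarrow> 'd \<Rightarrow> real"
  assumes "closed_riemannian A M" "(U, \<phi>, \<psi>) \<in> A"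
  shows "open U" "open (\<phi> ` U)" "homeomorphism U (\<phi> ` U) \<phi> \<psi>"
  using assms unfolding closed_riemannian_def by (elim conjE; meson)+

lemma closed_riemannian_covering:
  fixes A :: "('a::t2_space, 'd::euclidean_space) chart set"
    and M :: "('a, 'd) chart \<Rightarrow> 'd \<Rightarrow> 'd \<Rightarrow> 'd \<Rightarrow> real"
  assumes "closed_riemannian A M"
  obtains U \<phi> \<psi> where "(U, \<phi>, \<psi>) \<in> A" "p \<in> U"
  using assms unfolding closed_riemannian_def by (elim conjE) meson

lemma closed_riemannian_metric:
  fixes A :: "('a::t2_space, 'd::euclidean_space) chart set"
    and M :: "('a, 'd) chart \<Rightarrow> 'd \<Rightarrow> 'd \<Rightarrow> 'd \<Rightarrow> real"
  assumes "closed_riemannian A M" "(U, \<phi>, \<psi>) \<in> A" "x \<in> \<phi> ` U"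
  shows "bilinear (M (U, \<phi>, \<psi>) x)" "\<forall>u v. M (U, \<phi>, \<psi>) x u v = M (U, \<phi>, \<psi>) x v u"
    "\<forall>u. u \<noteq> 0 \<longrightarrow> M (U, \<phi>, \<psi>) x u u > 0"
  using assms unfolding closed_riemannian_def by (elim conjE; meson)+

lemma ehmhf_solution_local_extension:
  fixes A :: "('a::t2_space, 'd::euclidean_space) chart set"
    and M :: "('a, 'd) chart \<Rightarrow> 'd \<Rightarrow> 'd \<Rightarrow> 'd \<Rightarrow> real"
    and f :: "'a \<Rightarrow> real \<Rightarrow> 'e::euclidean_space"
  assumes "ehmhf_solution A M T f" "(U, \<phi>, \<psi>) \<in> A" "x0 \<in> \<phi> ` U" "t0 \<in> {0..<T}"
  obtains W g where "open W" "(x0, t0) \<in> W" "smooth_open W g"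
    "\<And>x t. (x, t) \<in> W \<Longrightarrow> x \<in> \<phi> ` U \<Longrightarrow> t \<in> {0..<T} \<Longrightarrow> g (x, t) = f (\<psi> x) t"
proof -
  have "smooth_set (\<phi> ` U \<times> {0..<T}) (\<lambda>(x, t). f (\<psi> x) t)"
    using assms(1,2) unfolding ehmhf_solution_def by blast
  moreover have "(x0, t0) \<in> \<phi> ` U \<times> {0..<T}" using assms(3,4) by simp
  ultimately obtain W g where "open W" "(x0, t0) \<in> W" "smooth_open W g"
    and "\<forall>q\<in>W \<inter> (\<phi> ` U \<times> {0..<T}). g q = (\<lambda>(x, t). f (\<psi> x) t) q"
    unfolding smooth_set_def by blast
  then show ?thesis by (intro that) auto
qed

lemma ehmhf_solution_continuous:
  fixes A :: "('a::t2_space, 'd::euclidean_space) chart set"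
    and M :: "('a, 'd) chart \<Rightarrow> 'd \<Rightarrow> 'd \<Rightarrow> 'd \<Rightarrow> real"
    and f :: "'a \<Rightarrow> real \<Rightarrow> 'e::euclidean_space"
  assumes cr: "closed_riemannian A M" and sol: "ehmhf_solution A M T f"
  shows "continuous_on (UNIV \<times> {0..<T}) (\<lambda>z. f (fst z) (snd z))"
proof (unfold continuous_on_eq_continuous_within, intro ballI)
  fix z :: "'a \<times> real" assume z: "z \<in> UNIV \<times> {0..<T}"
  obtain p t where zpt: "z = (p, t)" by (cases z)
  have t: "t \<in> {0..<T}" using z zpt by simp
  obtain U \<phi> \<psi> where ch: "(U, \<phi>, \<psi>) \<in> A" and pU: "p \<in> U"
    using closed_riemannian_covering[OF cr] by blast
  note oU = closed_riemannian_chart(1)[OF cr ch] and hom = closed_riemannian_chart(3)[OF cr ch]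
  obtain W g where W: "open W" "(\<phi> p, t) \<in> W" "smooth_open W g"
    and gf: "\<And>x s. (x, s) \<in> W \<Longrightarrow> x \<in> \<phi> ` U \<Longrightarrow> s \<in> {0..<T} \<Longrightarrow> g (x, s) = f (\<psi> x) s"
    using ehmhf_solution_local_extension[OF sol ch imageI[OF pU] t] by blast
  have gc: "continuous_on W g" using W(3) Ck.simps(1) unfolding smooth_open_def by metis
  define k where "k z = (\<phi> (fst z), snd z)" for z :: "'a \<times> real"
  have oUT: "open (U \<times> (UNIV :: real set))" using oU by (simp add: open_Times)
  have kc: "continuous_on (U \<times> UNIV) k"
    unfolding k_def
    by (intro continuous_on_Pair continuous_on_snd
        continuous_on_compose2[OF homeomorphism_cont1[OF hom] continuous_on_fst]) auto
  define Nbhd where "Nbhd = (U \<times> UNIV) \<inter> k -` W"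
  have "open Nbhd" unfolding Nbhd_def by (rule continuous_open_preimage[OF kc oUT W(1)])
  have "isCont k (p, t)"
    using kc pU unfolding continuous_on_eq_continuous_at[OF oUT] by (metis SigmaI UNIV_I)
  moreover have "isCont g (k (p, t))"
    using gc W by (simp add: continuous_on_eq_continuous_at k_def)
  ultimately have "isCont (\<lambda>z. g (k z)) (p, t)" by (rule isCont_o2)
  then have "continuous (at (p, t) within UNIV \<times> {0..<T}) (\<lambda>z. g (k z))"
    by (rule continuous_at_imp_continuous_at_within)
  then show "continuous (at z within UNIV \<times> {0..<T}) (\<lambda>z. f (fst z) (snd z))"
    unfolding zpt
  proof (rule continuous_transform_within_openin)
    show "openin (top_of_set (UNIV \<times> {0..<T})) ((UNIV \<times> {0..<T}) \<inter> Nbhd)"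
      using \<open>open Nbhd\<close> by blast
    show "(p, t) \<in> (UNIV \<times> {0..<T}) \<inter> Nbhd" using pU W(2) t by (simp add: Nbhd_def k_def)
    fix x assume x: "x \<in> (UNIV \<times> {0..<T}) \<inter> Nbhd"
    obtain q s where xqs: "x = (q, s)" by (cases x)
    have qU: "q \<in> U" and "s \<in> {0..<T}" "(\<phi> q, s) \<in> W"
      using x xqs unfolding Nbhd_def k_def by auto
    then have "g (\<phi> q, s) = f (\<psi> (\<phi> q)) s" using gf[OF _ imageI[OF qU]] by blast
    also have "\<dots> = f q s" using homeomorphism_apply1[OF hom qU] by simp
    finally show "g (k x) = f (fst x) (snd x)" by (simp add: xqs k_def)
  qed
qed

lemma ehmhf_solution_chart_twice_differentiable:
  fixes A :: "('a::t2_space, 'd::euclidean_space) chart set"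
    and M :: "('a, 'd) chart \<Rightarrow> 'd \<Rightarrow> 'd \<Rightarrow> 'd \<Rightarrow> real"
    and f :: "'a \<Rightarrow> real \<Rightarrow> 'e::euclidean_space"
  assumes sol: "ehmhf_solution A M T f" and openU: "open (\<phi> ` U)"
    and ch: "(U, \<phi>, \<psi>) \<in> A" and x0: "x0 \<in> \<phi> ` U" and t0: "t0 \<in> {0..<T}"
  obtains N where "open N" "x0 \<in> N" "N \<subseteq> \<phi> ` U"
    "\<forall>x\<in>N. (\<lambda>x. f (\<psi> x) t0) differentiable (at x)"
    "\<forall>j\<in>Basis. pd (\<lambda>x. f (\<psi> x) t0) j differentiable (at x0)"
proof -
  define F where "F x = f (\<psi> x) t0" for x
  obtain W g where W: "open W" "(x0, t0) \<in> W" "smooth_open W g"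
    and gf: "\<And>x t. (x, t) \<in> W \<Longrightarrow> x \<in> \<phi> ` U \<Longrightarrow> t \<in> {0..<T} \<Longrightarrow> g (x, t) = f (\<psi> x) t"
    using ehmhf_solution_local_extension[OF sol ch x0 t0] by blast
  have C2: "Ck (Suc (Suc 0)) W g" using W(3) unfolding smooth_open_def by blast
  then have gd: "\<forall>z\<in>W. g differentiable (at z)"
    and g1d: "\<forall>b\<in>Basis. \<forall>z\<in>W. (\<lambda>z. frechet_derivative g (at z) b) differentiable (at z)"
    by simp_all
  obtain e where e: "e > 0" "ball (x0, t0) e \<subseteq> W" using W openE by blast
  define N where "N = ball x0 e \<inter> \<phi> ` U"
  have oN: "open N" unfolding N_def using openU by auto
  have x0N: "x0 \<in> N" unfolding N_def using e x0 by simp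
  have inW: "(x, t0) \<in> W" if "x \<in> N" for x
    using that e unfolding N_def by (auto simp: dist_Pair_Pair)
  have FG: "F x = g (x, t0)" if "x \<in> N" for x
    using gf inW[OF that] that t0 unfolding N_def F_def by auto
  have pair: "((\<lambda>x. (x, t0)) has_derivative (\<lambda>h. (h, 0))) (at x)" for x :: 'd
    by (auto intro!: derivative_eq_intros)
  have hasF: "(F has_derivative (\<lambda>h. frechet_derivative g (at (x, t0)) (h, 0))) (at x)" if "x \<in> N" for x
  proof -
    have "(g has_derivative frechet_derivative g (at (x, t0))) (at (x, t0))"
      using gd inW[OF that] by (simp add: frechet_derivative_works[symmetric])
    from has_derivative_compose[OF pair this] show ?thesis
      by (rule has_derivative_transform_within_open[OF _ oN that]) (simp add: FG)
  qed
  have pdF: "pd F j x = frechet_derivative g (at (x, t0)) (j, 0)" if "x \<in> N" for x j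
    unfolding pd_def frechet_derivative_at[OF hasF[OF that], symmetric] by simp
  have "pd F j differentiable (at x0)" if j: "j \<in> Basis" for j
  proof -
    have "(j, 0::real) \<in> Basis" using j by (simp add: Basis_prod_def)
    then have "(\<lambda>z. frechet_derivative g (at z) (j, 0)) differentiable (at (x0, t0))"
      using g1d W(2) by blast
    then obtain D where D: "((\<lambda>z. frechet_derivative g (at z) (j, 0)) has_derivative D) (at (x0, t0))"
      unfolding differentiable_def by blast
    have "(pd F j has_derivative (\<lambda>h. D (h, 0))) (at x0)"
      using has_derivative_compose[OF pair D]
      by (rule has_derivative_transform_within_open[OF _ oN x0N]) (simp add: pdF)
    then show ?thesis unfolding differentiable_def by blast
  qed
  moreover have "\<forall>x\<in>N. F differentiable (at x)" using hasF unfolding differentiable_def by blast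
  moreover have "N \<subseteq> \<phi> ` U" unfolding N_def by blast
  ultimately show ?thesis
    using that[OF oN x0N] unfolding F_def[abs_def] by blast
qed

lemma ehmhf_solution_has_derivative_sq_norm:
  fixes A :: "('a::t2_space, 'd::euclidean_space) chart set"
    and M :: "('a, 'd) chart \<Rightarrow> 'd \<Rightarrow> 'd \<Rightarrow> 'd \<Rightarrow> real"
    and f :: "'a \<Rightarrow> real \<Rightarrow> 'e::euclidean_space"
  assumes sol: "ehmhf_solution A M T f" and ch: "(U, \<phi>, \<psi>) \<in> A" and p: "p \<in> U"
    and t: "0 < t" "t < T"
  shows "((\<lambda>s. f p s \<bullet> f p s) has_real_derivative
     2 * (f p t \<bullet> map_laplacian (M (U, \<phi>, \<psi>)) Gmetric (\<lambda>x. f (\<psi> x) t) (\<phi> p))) (at t)"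
proof -
  define L where "L = map_laplacian (M (U, \<phi>, \<psi>)) Gmetric (\<lambda>x. f (\<psi> x) t) (\<phi> p)"
  have "((\<lambda>s. f p s) has_vector_derivative L) (at t within {0..<T})"
    using sol ch p t unfolding ehmhf_solution_def L_def by auto
  moreover have "at t within {0..<T} = at t"
    by (rule at_within_interior) (use t in simp)
  ultimately have v: "((\<lambda>s. f p s) has_derivative (\<lambda>h. h *\<^sub>R L)) (at t)"
    by (simp add: has_vector_derivative_def)
  have "((\<lambda>s. f p s \<bullet> f p s) has_derivative (\<lambda>h. f p t \<bullet> (h *\<^sub>R L) + (h *\<^sub>R L) \<bullet> f p t)) (at t)"
    by (rule has_derivative_inner[OF v v])
  moreover have "(\<lambda>h. f p t \<bullet> (h *\<^sub>R L) + (h *\<^sub>R L) \<bullet> f p t) = (*) (2 * (f p t \<bullet> L))"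
    by (auto simp: fun_eq_iff inner_commute algebra_simps)
  ultimately show ?thesis unfolding L_def[symmetric] by (simp add: has_field_derivative_def)
qed

text \<open>Tangency kills the Christoffel term of m, and only the normal part of the Gmetric term
  survives.\<close>
lemma inner_map_laplacian_Gmetric:
  fixes F :: "'d::euclidean_space \<Rightarrow> 'e::euclidean_space"
  assumes y0: "F x0 \<noteq> 0" and tangent: "\<forall>l\<in>Basis. pd F l x0 \<bullet> F x0 = 0"
  shows "F x0 \<bullet> map_laplacian m Gmetric F x0
    = (\<Sum>i\<in>Basis. \<Sum>j\<in>Basis. inv_comp (m x0) i j *
         (F x0 \<bullet> pd (pd F j) i x0 + 2 / ((F x0 \<bullet> F x0)^2 + 1) * (pd F i x0 \<bullet> pd F j x0)))"
proof -
  define y where "y = F x0"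
  define D where "D l = pd F l x0" for l
  have normal: "y \<bullet> (pd (pd F j) i x0 - (\<Sum>l\<in>Basis. christoffel m x0 l i j *\<^sub>R D l)
      + (\<Sum>\<alpha>\<in>Basis. (\<Sum>\<beta>\<in>Basis. \<Sum>\<gamma>\<in>Basis. christoffel Gmetric y \<alpha> \<beta> \<gamma> * (D i \<bullet> \<beta>) * (D j \<bullet> \<gamma>)) *\<^sub>R \<alpha>))
      = y \<bullet> pd (pd F j) i x0 + 2 / ((y \<bullet> y)^2 + 1) * (D i \<bullet> D j)" if ij: "i \<in> Basis" "j \<in> Basis" for i j
  proof -
    have "(\<Sum>l\<in>Basis. christoffel m x0 l i j * (y \<bullet> D l)) = 0"
      using tangent by (intro sum.neutral) (simp add: y_def D_def inner_commute)
    moreover have "(\<Sum>\<alpha>\<in>Basis. (\<Sum>\<beta>\<in>Basis. \<Sum>\<gamma>\<in>Basis. christoffel Gmetric y \<alpha> \<beta> \<gamma> * (D i \<bullet> \<beta>) * (D j \<bullet> \<gamma>)) * (y \<bullet> \<alpha>))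
       = 2 / ((y \<bullet> y)^2 + 1) * (D i \<bullet> D j)"
      using christoffel_Gmetric_normal_component[of y "D i" "D j"] y0 tangent ij
      by (simp add: y_def D_def)
    ultimately show ?thesis
      by (simp only: inner_diff_right inner_add_right inner_sum_right inner_scaleR_right diff_zero)
  qed
  show ?thesis
    unfolding map_laplacian_def inner_sum_right inner_scaleR_right
    using normal by (simp add: y_def D_def)
qed

lemma trace_inner_nonneg:
  fixes D :: "'i \<Rightarrow> 'e::euclidean_space"
  assumes "pos_def_on I P"
  shows "(\<Sum>i\<in>I. \<Sum>j\<in>I. P i j * (D i \<bullet> D j)) \<ge> 0"
proof -
  have "D i \<bullet> D j = (\<Sum>\<alpha>\<in>Basis. (D i \<bullet> \<alpha>) * (D j \<bullet> \<alpha>))" for i j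
    by (rule euclidean_inner)
  then have "(\<Sum>i\<in>I. \<Sum>j\<in>I. P i j * (D i \<bullet> D j))
      = (\<Sum>i\<in>I. \<Sum>j\<in>I. \<Sum>\<alpha>\<in>Basis. (D i \<bullet> \<alpha>) * (D j \<bullet> \<alpha>) * P i j)"
    by (simp add: sum_distrib_left algebra_simps)
  also have "\<dots> = (\<Sum>i\<in>I. \<Sum>\<alpha>\<in>Basis. \<Sum>j\<in>I. (D i \<bullet> \<alpha>) * (D j \<bullet> \<alpha>) * P i j)"
    by (intro sum.cong refl) (rule sum.swap)
  also have "\<dots> = (\<Sum>\<alpha>\<in>Basis. quad_form I P (\<lambda>i. D i \<bullet> \<alpha>))"
    unfolding quad_form_def by (rule sum.swap)
  also have "\<dots> \<ge> 0"
    by (intro sum_nonneg pos_def_on_imp_quad_form_nonneg[OF assms])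
  finally show ?thesis .
qed

text \<open>Throughout, \<open>\<sigma> = 1\<close> handles upper bounds on \<open>|f|\<^sup>2\<close> (outside the unit sphere) and
  \<open>\<sigma> = -1\<close> lower bounds (inside it).\<close>
lemma Gmetric_normal_factor_sign:
  fixes \<sigma> s :: real
  assumes "\<sigma> = 1 \<or> \<sigma> = -1" "\<sigma> * (s - 1) \<ge> 0" "s > 0"
  shows "\<sigma> * (2 / (s^2 + 1) - 1) \<le> 0"
proof (cases "\<sigma> = 1")
  case True
  then have "s^2 \<ge> 1" using assms(2) by simp
  then show ?thesis using True by simp
next
  case False
  then have "\<sigma> = -1" "s \<le> 1" using assms(1,2) by auto
  moreover from this have "s^2 \<le> 1" using assms(3) by (simp add: power_le_one)
  moreover have "s^2 + 1 > 0" by (simp add: add_nonneg_pos)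
  ultimately show ?thesis by (simp add: le_divide_eq)
qed

lemma map_laplacian_sign_at_sq_norm_extremum:
  fixes A :: "('a::t2_space, 'd::euclidean_space) chart set"
    and M :: "('a, 'd) chart \<Rightarrow> 'd \<Rightarrow> 'd \<Rightarrow> 'd \<Rightarrow> real"
    and f :: "'a \<Rightarrow> real \<Rightarrow> 'e::euclidean_space" and \<sigma> :: real
  assumes cr: "closed_riemannian A M" and sol: "ehmhf_solution A M T f"
    and ch: "(U, \<phi>, \<psi>) \<in> A" and p0: "p0 \<in> U" and t0: "t0 \<in> {0..<T}"
    and sg: "\<sigma> = 1 \<or> \<sigma> = -1"
    and max: "\<forall>q. \<sigma> * (f q t0 \<bullet> f q t0) \<le> \<sigma> * (f p0 t0 \<bullet> f p0 t0)"
    and side: "\<sigma> * (f p0 t0 \<bullet> f p0 t0 - 1) \<ge> 0"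
  shows "\<sigma> * (f p0 t0 \<bullet> map_laplacian (M (U, \<phi>, \<psi>)) Gmetric (\<lambda>x. f (\<psi> x) t0) (\<phi> p0)) \<le> 0"
proof -
  note hom = closed_riemannian_chart(3)[OF cr ch]
  define x0 where "x0 = \<phi> p0"
  have x0U: "x0 \<in> \<phi> ` U" unfolding x0_def using p0 by simp
  define F where "F x = f (\<psi> x) t0" for x
  have Fx0: "F x0 = f p0 t0"
    unfolding F_def x0_def using homeomorphism_apply1[OF hom p0] by simp
  obtain N where N: "open N" "x0 \<in> N" "N \<subseteq> \<phi> ` U" "\<forall>x\<in>N. F differentiable (at x)"
      "\<forall>j\<in>Basis. pd F j differentiable (at x0)"
    using ehmhf_solution_chart_twice_differentiable[OF sol closed_riemannian_chart(2)[OF cr ch] ch x0U t0]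
    unfolding F_def[abs_def] by blast
  have maxN: "\<forall>x\<in>N. \<sigma> * (F x \<bullet> F x) \<le> \<sigma> * (F x0 \<bullet> F x0)"
    using max unfolding Fx0 by (simp add: F_def)
  have "\<sigma> \<noteq> 0" using sg by auto
  have tangent: "\<forall>l\<in>Basis. pd F l x0 \<bullet> F x0 = 0"
    using sq_norm_local_max_critical[OF N(1,2,4) \<open>\<sigma> \<noteq> 0\<close> maxN] by (simp add: pd_def inner_commute)
  have "F x0 \<noteq> 0" using sol t0 unfolding Fx0 ehmhf_solution_def by blast
  define m where "m = M (U, \<phi>, \<psi>)"
  define P where "P = inv_comp (m x0)"
  define \<kappa> where "\<kappa> = 2 / ((F x0 \<bullet> F x0)^2 + 1)"
  define Q where "Q i j = pd F i x0 \<bullet> pd F j x0 + F x0 \<bullet> pd (pd F j) i x0" for i j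
  define G where "G = (\<Sum>i\<in>Basis. \<Sum>j\<in>Basis. P i j * (pd F i x0 \<bullet> pd F j x0))"
  note m_x0 = closed_riemannian_metric[OF cr ch x0U, folded m_def]
  have "\<sigma> * (F x0 \<bullet> map_laplacian m Gmetric F x0)
     = (\<Sum>i\<in>Basis. \<Sum>j\<in>Basis. P i j * (\<sigma> * Q i j)) + \<sigma> * (\<kappa> - 1) * G"
    unfolding inner_map_laplacian_Gmetric[OF \<open>F x0 \<noteq> 0\<close> tangent] P_def[symmetric] \<kappa>_def[symmetric]
    unfolding G_def Q_def sum_distrib_left
    by (simp add: sum.distrib[symmetric] algebra_simps)
  also have "\<dots> \<le> 0"
  proof -
    have "(\<Sum>i\<in>Basis. \<Sum>j\<in>Basis. P i j * (\<sigma> * Q i j)) \<le> 0"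
    proof (rule pos_def_neg_semidef_trace_nonpos[OF finite_Basis])
      show "\<forall>i\<in>Basis. \<forall>j\<in>Basis. P i j = P j i"
        unfolding P_def by (rule inv_comp_symmetric[OF m_x0])
      show "pos_def_on Basis P"
        unfolding P_def by (rule inv_comp_pos_def[OF m_x0(1,3)])
      show "\<forall>v. quad_form Basis (\<lambda>i j. \<sigma> * Q i j) v \<le> 0"
        using sq_norm_local_max_hessian[OF N(1,2,4,5) \<open>\<sigma> \<noteq> 0\<close> maxN]
        by (simp add: quad_form_def Q_def sum_distrib_left algebra_simps)
    qed
    moreover have "G \<ge> 0"
      unfolding G_def P_def by (rule trace_inner_nonneg[OF inv_comp_pos_def[OF m_x0(1,3)]])
    moreover have "\<sigma> * (\<kappa> - 1) \<le> 0"
      unfolding \<kappa>_def using Gmetric_normal_factor_sign[OF sg] side \<open>F x0 \<noteq> 0\<close> by (simp add: Fx0)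
    ultimately show ?thesis by (simp add: mult_nonpos_nonneg add_nonpos_nonpos)
  qed
  finally show ?thesis
    unfolding m_def x0_def F_def[abs_def] using homeomorphism_apply1[OF hom p0] by (simp add: x0_def)
qed

lemma first_time_nonneg:
  fixes \<Phi> :: "'a::topological_space \<times> real \<Rightarrow> real"
  assumes cpt: "compact (UNIV :: 'a set)"
    and cont: "continuous_on (UNIV \<times> {0..<T}) \<Phi>"
    and init: "\<forall>p. \<Phi> (p, 0) < 0"
    and t1: "t1 \<in> {0..<T}" and p1: "\<Phi> (p1, t1) \<ge> 0"
  obtains p0 t0 where "0 < t0" "t0 < T" "\<Phi> (p0, t0) = 0" "\<forall>q. \<Phi> (q, t0) \<le> 0"
    "\<And>q s. 0 \<le> s \<Longrightarrow> s < t0 \<Longrightarrow> \<Phi> (q, s) < 0"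
proof -
  define S where "S = (UNIV :: 'a set) \<times> {0..t1}"
  have contS: "continuous_on S \<Phi>" unfolding S_def
    by (rule continuous_on_subset[OF cont]) (use t1 in auto)
  define C where "C = S \<inter> \<Phi> -` {0..}"
  have "closed C" unfolding C_def
    by (rule continuous_closed_preimage[OF contS]) (auto simp: S_def intro: closed_Times)
  moreover have "compact S" unfolding S_def using cpt by (intro compact_Times) auto
  ultimately have "compact C" using compact_Int_closed unfolding C_def by (metis Int_absorb1 inf_le1)
  then have "compact (snd ` C)"
    by (rule compact_continuous_image[OF continuous_on_snd[OF continuous_on_id]])
  moreover have "snd ` C \<noteq> {}" using p1 t1 unfolding C_def S_def by force
  ultimately obtain t0 where t0C: "t0 \<in> snd ` C" and t0min: "\<forall>t\<in>snd ` C. t0 \<le> t"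
    using compact_attains_inf by blast
  then obtain p0 where "(p0, t0) \<in> C" by force
  then have t0: "0 \<le> t0" "t0 < T" "t0 \<le> t1" and Phi0: "\<Phi> (p0, t0) \<ge> 0"
    using t1 unfolding C_def S_def by auto
  have before: "\<Phi> (q, s) < 0" if "0 \<le> s" "s < t0" for q s
  proof (rule ccontr)
    assume "\<not> \<Phi> (q, s) < 0"
    then have "(q, s) \<in> C" unfolding C_def S_def using that t0 by auto
    then show False using t0min that by force
  qed
  have "t0 \<noteq> 0" using Phi0 init by (metis not_le)
  with t0 have t0pos: "t0 > 0" by simp
  \<comment> \<open>By continuity from the left, \<Phi> cannot be positive at the first time it reaches 0.\<close>
  have at_t0: "\<Phi> (q, t0) \<le> 0" for q
  proof (rule ccontr)
    assume "\<not> \<Phi> (q, t0) \<le> 0"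
    have "continuous_on {0..<T} (\<lambda>s. \<Phi> (q, s))"
      by (rule continuous_on_compose2[OF cont]) (auto intro!: continuous_intros)
    then obtain d where d: "d > 0"
      "\<forall>s\<in>{0..<T}. dist s t0 < d \<longrightarrow> dist (\<Phi> (q, s)) (\<Phi> (q, t0)) < \<Phi> (q, t0)"
      using \<open>\<not> \<Phi> (q, t0) \<le> 0\<close> t0 unfolding continuous_on_iff by (meson atLeastLessThan_iff not_le)
    define s where "s = t0 - min d t0 / 2"
    have s: "0 \<le> s" "s < t0" "dist s t0 < d" using d t0pos by (auto simp: s_def dist_real_def)
    then have "dist (\<Phi> (q, s)) (\<Phi> (q, t0)) < \<Phi> (q, t0)" using d(2) t0 by auto
    then have "\<Phi> (q, s) > 0" by (simp add: dist_real_def)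
    then show False using before[OF s(1,2), of q] by simp
  qed
  have "\<Phi> (p0, t0) = 0" using at_t0[of p0] Phi0 by simp
  then show ?thesis using that[OF t0pos t0(2) _ _ before] at_t0 by blast
qed

lemma parabolic_max_principle:
  fixes \<Phi> :: "'a::topological_space \<times> real \<Rightarrow> real"
  assumes cpt: "compact (UNIV :: 'a set)"
    and cont: "continuous_on (UNIV \<times> {0..<T}) \<Phi>"
    and init: "\<forall>p. \<Phi> (p, 0) < 0"
    and deriv: "\<And>p t. 0 < t \<Longrightarrow> t < T \<Longrightarrow> \<forall>q. \<Phi> (q, t) \<le> \<Phi> (p, t) \<Longrightarrow> \<Phi> (p, t) = 0 \<Longrightarrow>
                \<exists>D<0. ((\<lambda>s. \<Phi> (p, s)) has_real_derivative D) (at t)"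
  shows "\<forall>p. \<forall>t\<in>{0..<T}. \<Phi> (p, t) < 0"
proof (rule ccontr)
  assume "\<not> ?thesis"
  then obtain p1 t1 where "t1 \<in> {0..<T}" "\<Phi> (p1, t1) \<ge> 0" by (auto simp: not_less)
  then obtain p0 t0 where t0: "0 < t0" "t0 < T" and z: "\<Phi> (p0, t0) = 0"
    and max: "\<forall>q. \<Phi> (q, t0) \<le> 0" and before: "\<And>q s. 0 \<le> s \<Longrightarrow> s < t0 \<Longrightarrow> \<Phi> (q, s) < 0"
    using first_time_nonneg[OF cpt cont init] by metis
  obtain D where "D < 0" "((\<lambda>s. \<Phi> (p0, s)) has_real_derivative D) (at t0)"
    using deriv[OF t0] max z by auto
  then obtain d where d: "d > 0" "\<And>h. 0 < h \<Longrightarrow> h < d \<Longrightarrow> \<Phi> (p0, t0) < \<Phi> (p0, t0 - h)"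
    using DERIV_neg_dec_left by blast
  define h where "h = min d t0 / 2"
  have h: "h > 0" "h < d" "h \<le> t0" using d t0 by (auto simp: h_def)
  have "\<Phi> (p0, t0 - h) > 0" using d(2) h z by fastforce
  moreover have "\<Phi> (p0, t0 - h) < 0" using before[of "t0 - h" p0] h t0 by simp
  ultimately show False by simp
qed

lemma sq_norm_bound_preserved:
  fixes A :: "('a::t2_space, 'd::euclidean_space) chart set"
    and M :: "('a, 'd) chart \<Rightarrow> 'd \<Rightarrow> 'd \<Rightarrow> 'd \<Rightarrow> real"
    and f :: "'a \<Rightarrow> real \<Rightarrow> 'e::euclidean_space" and \<sigma> K :: real
  assumes cr: "closed_riemannian A M" and sol: "ehmhf_solution A M T f"
    and sg: "\<sigma> = 1 \<or> \<sigma> = -1" and K: "\<sigma> * (K - 1) \<ge> 0"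
    and init: "\<forall>p. \<sigma> * (f p 0 \<bullet> f p 0 - K) \<le> 0"
  shows "\<forall>p. \<forall>t\<in>{0..<T}. \<sigma> * (f p t \<bullet> f p t - K) \<le> 0"
proof (rule ccontr)
  assume "\<not> ?thesis"
  then obtain p1 t1 where t1: "t1 \<in> {0..<T}" and p1: "\<sigma> * (f p1 t1 \<bullet> f p1 t1 - K) > 0"
    by (auto simp: not_le)
  \<comment> \<open>The linear-in-time penalty turns the weak inequality at a first touching point into a strict one.\<close>
  define \<epsilon> where "\<epsilon> = \<sigma> * (f p1 t1 \<bullet> f p1 t1 - K) / (2 * (1 + t1))"
  have "\<epsilon> > 0" unfolding \<epsilon>_def using p1 t1 by simp
  define \<Phi> where "\<Phi> z = \<sigma> * (f (fst z) (snd z) \<bullet> f (fst z) (snd z) - K) - \<epsilon> * (1 + snd z)"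
    for z :: "'a \<times> real"
  have "\<forall>p. \<forall>t\<in>{0..<T}. \<Phi> (p, t) < 0"
  proof (rule parabolic_max_principle[OF closed_riemannian_compact[OF cr]])
    show "continuous_on (UNIV \<times> {0..<T}) \<Phi>"
      unfolding \<Phi>_def using ehmhf_solution_continuous[OF cr sol] by (intro continuous_intros) auto
    show "\<forall>p. \<Phi> (p, 0) < 0"
    proof
      fix p show "\<Phi> (p, 0) < 0" using init[rule_format, of p] \<open>\<epsilon> > 0\<close> unfolding \<Phi>_def by simp
    qed
    fix p t assume t: "0 < t" "t < T" and max: "\<forall>q. \<Phi> (q, t) \<le> \<Phi> (p, t)" and z: "\<Phi> (p, t) = 0"
    obtain U \<phi> \<psi> where ch: "(U, \<phi>, \<psi>) \<in> A" and pU: "p \<in> U"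
      using closed_riemannian_covering[OF cr] by blast
    define L where "L = map_laplacian (M (U, \<phi>, \<psi>)) Gmetric (\<lambda>x. f (\<psi> x) t) (\<phi> p)"
    have "\<forall>q. \<sigma> * (f q t \<bullet> f q t) \<le> \<sigma> * (f p t \<bullet> f p t)"
      using max unfolding \<Phi>_def by (simp add: right_diff_distrib)
    moreover have "\<sigma> * (f p t \<bullet> f p t - 1) \<ge> 0"
    proof -
      have "\<sigma> * (f p t \<bullet> f p t - K) = \<epsilon> * (1 + t)" using z unfolding \<Phi>_def by simp
      then have "\<sigma> * (f p t \<bullet> f p t - K) > 0" using \<open>\<epsilon> > 0\<close> t by simp
      then show ?thesis using K by (simp add: right_diff_distrib)
    qed
    ultimately have "\<sigma> * (f p t \<bullet> L) \<le> 0"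
      unfolding L_def using t by (intro map_laplacian_sign_at_sq_norm_extremum[OF cr sol ch pU _ sg]) auto
    moreover have "((\<lambda>s. \<Phi> (p, s)) has_real_derivative \<sigma> * (2 * (f p t \<bullet> L)) - \<epsilon>) (at t)"
      unfolding \<Phi>_def L_def
      by (rule derivative_eq_intros ehmhf_solution_has_derivative_sq_norm[OF sol ch pU t] refl | simp)+
    ultimately show "\<exists>D<0. ((\<lambda>s. \<Phi> (p, s)) has_real_derivative D) (at t)"
      using \<open>\<epsilon> > 0\<close> by (intro exI[of _ "\<sigma> * (2 * (f p t \<bullet> L)) - \<epsilon>"]) simp
  qed
  then have "\<sigma> * (f p1 t1 \<bullet> f p1 t1 - K) < \<epsilon> * (1 + t1)" using t1 unfolding \<Phi>_def by fastforce
  also have "\<epsilon> * (1 + t1) = \<sigma> * (f p1 t1 \<bullet> f p1 t1 - K) / 2" unfolding \<epsilon>_def using t1 by (simp add: field_simps)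
  finally show False using p1 by simp
qed

lemma abs_norm_minus_one_le_iff:
  fixes x :: "'e::real_inner" and \<delta> :: real
  assumes "0 \<le> \<delta>" "\<delta> < 1"
  shows "\<bar>norm x - 1\<bar> \<le> \<delta> \<longleftrightarrow> (1 - \<delta>)^2 \<le> x \<bullet> x \<and> x \<bullet> x \<le> (1 + \<delta>)^2"
proof -
  have "x \<bullet> x = norm x ^ 2" by (simp add: power2_norm_eq_inner)
  moreover have "(1 - \<delta>)^2 \<le> norm x ^ 2 \<longleftrightarrow> 1 - \<delta> \<le> norm x"
    using assms by simp
  moreover have "norm x ^ 2 \<le> (1 + \<delta>)^2 \<longleftrightarrow> norm x \<le> 1 + \<delta>"
    using assms by simp
  ultimately show ?thesis by (auto simp: abs_le_iff)
qed

theorem mainTheorem2: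
  fixes A :: "('a::t2_space set \<times> ('a \<Rightarrow> 'd::euclidean_space) \<times> ('d \<Rightarrow> 'a)) set"
    and M :: "('a set \<times> ('a \<Rightarrow> 'd) \<times> ('d \<Rightarrow> 'a)) \<Rightarrow> 'd \<Rightarrow> 'd \<Rightarrow> 'd \<Rightarrow> real"
    and f :: "'a \<Rightarrow> real \<Rightarrow> 'e::euclidean_space"
    and T \<delta> :: real
  assumes "closed_riemannian A M"
    and "T > 0"
    and "ehmhf_solution A M T f"
    and "0 \<le> \<delta>" and "\<delta> < 1"
    and "\<forall>p. \<bar>norm (f p 0) - 1\<bar> \<le> \<delta>"
  shows "\<forall>p. \<forall>t\<in>{0..<T}. \<bar>norm (f p t) - 1\<bar> \<le> \<delta>"
proof -
  note bound_iff = abs_norm_minus_one_le_iff[OF assms(4,5)]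
  have "\<forall>p. \<forall>t\<in>{0..<T}. 1 * (f p t \<bullet> f p t - (1 + \<delta>)^2) \<le> 0"
    using assms(4,6) by (intro sq_norm_bound_preserved[OF assms(1,3)]) (auto simp: bound_iff)
  moreover have "\<forall>p. \<forall>t\<in>{0..<T}. -1 * (f p t \<bullet> f p t - (1 - \<delta>)^2) \<le> 0"
    using assms(4,5,6) by (intro sq_norm_bound_preserved[OF assms(1,3)]) (auto simp: bound_iff power_le_one)
  ultimately show ?thesis by (auto simp: bound_iff)
qed

end
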